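(* Fix a positive integer $p$. For $n=pf$ let $A_{f\text{-APD},\mathrm{BAL},\mathrm{MU},4,n}$ denote the maximum size of a code $\mathcal{C}\subseteq\{\mathtt{A},\mathtt{T},\mathtt{C},\mathtt{G}\}^n$ that is simultaneously $f$-APD, balanced and MU. Then there exists a constant $c_3>0$ (depending only on $p$) such that for all sufficiently large even $f$, with $n=pf$, \[ c_3\,\frac{\binom{n}{n/2}2^n}{n}\le A_{f\text{-APD},\mathrm{BAL},\mathrm{MU},4,n}\le\frac{\binom{n}{n/2}2^n}{n}. \]
   Context: Sequences are over $\{\mathtt{A},\mathtt{T},\mathtt{C},\mathtt{G}\}$ (identified with $\mathbb{F}_4$). For $\mathbf{a}=(a_1,\dots,a_n)$ write $\mathbf{a}_i^j=(a_i,\dots,a_j)$ if $i\le j$ and $(a_i,a_{i-1},\dots,a_j)$ if $i>j$; the complement $\bar{\mathbf{a}}$ applies $\mathtt{A}\leftrightarrow\mathtt{T}$, $\mathtt{C}\leftrightarrow\mathtt{G}$ coordinatewise. A sequence is balanced if exactly $n/2$ entries lie in $\{\mathtt{G},\mathtt{C}\}$; a code is balanced if every codeword is. A code $\mathcal{C}$ is MU if for all not necessarily distinct $\mathbf{a},\mathbf{b}\in\mathcal{C}$ and all $1\le l<n$, $\mathbf{a}_1^l\ne\mathbf{b}_{n-l+1}^n$. It is $f$-APD if for all not necessarily distinct $\mathbf{a},\mathbf{b}\in\mathcal{C}$ and all $1\le i,j\le n+1-f$, $\bar{\mathbf{a}}_i^{f+i-1}\ne\mathbf{b}_j^{f+j-1}$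 and $\bar{\mathbf{a}}_i^{f+i-1}\ne\mathbf{b}_{f+j-1}^{j}$. *)

theory Defs
  imports Complex_Main
begin

datatype nuc = A | T | C | G

fun compl :: "nuc \<Rightarrow> nuc" where
  "compl A = T" | "compl T = A" | "compl C = G" | "compl G = C"

text \<open>Sequences are lists; positions are 1-based in the paper.
  window w i f = (w_i, ..., w_{f+i-1}) for 1-based i.\<close>
definition window :: "nuc list \<Rightarrow> nat \<Rightarrow> nat \<Rightarrow> nuc list" where
  "window w i f = take f (drop (i - 1) w)"

definition balanced :: "nuc list \<Rightarrow> bool" where
  "balanced w \<longleftrightarrow> 2 * length (filter (\<lambda>x. x = G \<or> x = C) w) = length w"

definition balanced_code :: "nuc list set \<Rightarrow> bool" where
  "balanced_code K \<longleftrightarrow> (\<forall>w\<in>K. balanced w)"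

definition MU :: "nat \<Rightarrow> nuc list set \<Rightarrow> bool" where
  "MU n K \<longleftrightarrow> (\<forall>a\<in>K. \<forall>b\<in>K. \<forall>l. 1 \<le> l \<and> l < n \<longrightarrow> take l a \<noteq> drop (n - l) b)"

definition APD :: "nat \<Rightarrow> nat \<Rightarrow> nuc list set \<Rightarrow> bool" where
  "APD f n K \<longleftrightarrow> (\<forall>a\<in>K. \<forall>b\<in>K. \<forall>i j. 1 \<le> i \<and> i \<le> n + 1 - f \<and> 1 \<le> j \<and> j \<le> n + 1 - f \<longrightarrow>
      map compl (window a i f) \<noteq> window b j f \<and>
      map compl (window a i f) \<noteq> rev (window b j f))"

definition A_max :: "nat \<Rightarrow> nat \<Rightarrow> nat" where
  "A_max f n = Max {card K | K. K \<subseteq> {w. length w = n} \<and> APD f n K \<and> balanced_code K \<and> MU n K}"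

end

theory Submission
  imports Defs "HOL-Library.Discrete_Functions" "HOL-Library.Sublist" "HOL-Analysis.Convex"
    "HOL-Real_Asymp.Real_Asymp"
begin

text \<open>
  Upper bound: in a balanced MU code of length \<open>n\<close>, the \<open>n\<close> cyclic shifts of all codewords are
  pairwise distinct balanced words, since a coincidence would give an overlap forbidden by MU;
  hence \<open>n \<cdot> |K| \<le> (n choose n/2) \<cdot> 2\<^sup>n\<close>.

  Lower bound: a word is determined by its G/C-indicator \<open>g\<close> and its A/C-indicator \<open>u\<close>.
  Take \<open>g\<close> balanced, and \<open>u = 0\<^sup>k 1 z 1\<close> with \<open>k \<approx> log n\<close>, where \<open>z\<close> has no run of \<open>k\<close> zeros
  (this gives MU) and \<open>z\<close> is a concatenation of \<open>s = 200 p\<close> blocks of length about \<open>L = n/s\<close>,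
  each a \<open>\<plusminus>1\<close> walk that ends at least \<open>\<surd>(L/2)\<close> above its start and never strays
  \<open>\<surd>(96 L)\<close> from it. Then every window of length \<open>f\<close> spans many blocks, so its \<open>\<plusminus>1\<close> sum
  along \<open>u\<close> is positive, while complementation negates it and reversal keeps it: the code is
  \<open>f\<close>-APD. By the Paley--Zygmund inequality and Kolmogorov's maximal inequality, a fraction
  \<open>1/48\<close> of all walks of each block length qualifies, and excluding long runs of zeros costs at
  most a factor \<open>2\<close>. The remaining losses, the constant \<open>2 \<cdot> 48\<^sup>s\<close> and the factor
  \<open>2\<^bsup>k + 2\<^esup> = O(n)\<close> spent on the markers, are absorbed into \<open>c\<^sub>3\<close>.
\<close>

section \<open>Simple random walks\<close>

definition walk_sum :: "bool list \<Rightarrow> int" where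
  "walk_sum xs = (\<Sum>b\<leftarrow>xs. if b then 1 else -1)"

lemma walk_sum_Nil [simp]: "walk_sum [] = 0"
  and walk_sum_Cons [simp]: "walk_sum (b # xs) = (if b then 1 else -1) + walk_sum xs"
  and walk_sum_append [simp]: "walk_sum (xs @ ys) = walk_sum xs + walk_sum ys"
  by (simp_all add: walk_sum_def)

lemma walk_sum_ge: "- int (length xs) \<le> walk_sum xs"
  by (induct xs) auto

lemma walk_sum_map_Not [simp]: "walk_sum (map Not xs) = - walk_sum xs"
  by (induct xs) auto

lemma walk_sum_rev [simp]: "walk_sum (rev xs) = walk_sum xs"
  by (induct xs) auto

definition bool_lists :: "nat \<Rightarrow> bool list set" where
  "bool_lists n = {xs. length xs = n}"

lemma bool_lists_eq_lists: "bool_lists n = {xs. set xs \<subseteq> UNIV \<and> length xs = n}"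
  by (simp add: bool_lists_def)

lemma finite_bool_lists [simp]: "finite (bool_lists n)"
  using finite_lists_length_eq[of "UNIV :: bool set" n] by (simp only: bool_lists_eq_lists) simp

lemma card_bool_lists: "card (bool_lists n) = 2 ^ n"
  using card_lists_length_eq[of "UNIV :: bool set" n] by (simp only: bool_lists_eq_lists) simp

lemma bool_lists_0 [simp]: "bool_lists 0 = {[]}"
  by (auto simp: bool_lists_def)

lemma sum_bool_lists_Suc:
  "(\<Sum>xs\<in>bool_lists (Suc n). g xs) = (\<Sum>xs\<in>bool_lists n. g (True # xs) + g (False # xs))"
proof -
  have "bool_lists (Suc n) = Cons True ` bool_lists n \<union> Cons False ` bool_lists n"
    by (auto simp: bool_lists_def length_Suc_conv)
  then have "(\<Sum>xs\<in>bool_lists (Suc n). g xs)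
      = (\<Sum>xs\<in>Cons True ` bool_lists n. g xs) + (\<Sum>xs\<in>Cons False ` bool_lists n. g xs)"
    by (simp only:) (rule sum.union_disjoint; auto)
  then show ?thesis by (simp add: sum.reindex sum.distrib)
qed

lemma card_bool_lists_filter:
  "card {xs\<in>bool_lists n. P xs} = (\<Sum>xs\<in>bool_lists n. if P xs then 1 else 0)"
  by (simp add: sum.If_cases Int_def)

lemma card_bool_lists_count_True: "card {xs\<in>bool_lists n. count_list xs True = m} = n choose m"
  unfolding card_bool_lists_filter
proof (induct n arbitrary: m)
  case 0
  then show ?case by (cases m) simp_all
next
  case (Suc n)
  then show ?case by (cases m) (simp_all add: sum_bool_lists_Suc sum.distrib)
qed

lemma sum_bool_lists_Suc_walk_sum:
  "(\<Sum>xs\<in>bool_lists (Suc n). g (walk_sum xs))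
     = (\<Sum>xs\<in>bool_lists n. g (walk_sum xs + 1) + g (walk_sum xs - 1))"
  by (simp add: sum_bool_lists_Suc add.commute)

lemma sum_walk_sum: "(\<Sum>xs\<in>bool_lists n. real_of_int (walk_sum xs)) = 0"
proof (induct n)
  case (Suc n)
  then show ?case
    by (simp add: sum_bool_lists_Suc_walk_sum[where g = real_of_int] sum.distrib
        sum_distrib_left[symmetric])
qed simp

lemma sum_walk_sum_power2: "(\<Sum>xs\<in>bool_lists n. real_of_int (walk_sum xs) ^ 2) = real n * 2 ^ n"
proof (induct n)
  case (Suc n)
  have "(\<Sum>xs\<in>bool_lists (Suc n). real_of_int (walk_sum xs) ^ 2)
      = (\<Sum>xs\<in>bool_lists n. 2 * real_of_int (walk_sum xs) ^ 2 + 2)"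
    unfolding sum_bool_lists_Suc_walk_sum[where g = "\<lambda>x. real_of_int x ^ 2"]
    by (intro sum.cong) (simp_all add: power2_eq_square algebra_simps)
  then show ?case
    by (simp add: sum.distrib sum_distrib_left[symmetric] Suc card_bool_lists algebra_simps)
qed simp

lemma sum_walk_sum_power4:
  "(\<Sum>xs\<in>bool_lists n. real_of_int (walk_sum xs) ^ 4) = (3 * real n ^ 2 - 2 * real n) * 2 ^ n"
proof (induct n)
  case (Suc n)
  have "(\<Sum>xs\<in>bool_lists (Suc n). real_of_int (walk_sum xs) ^ 4)
      = (\<Sum>xs\<in>bool_lists n. 2 * real_of_int (walk_sum xs) ^ 4 + 12 * real_of_int (walk_sum xs) ^ 2 + 2)"
    unfolding sum_bool_lists_Suc_walk_sum[where g = "\<lambda>x. real_of_int x ^ 4"]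
    by (intro sum.cong) (simp_all add: power_def eval_nat_numeral algebra_simps)
  also have "\<dots> = 2 * ((3 * real n ^ 2 - 2 * real n) * 2 ^ n) + 12 * (real n * 2 ^ n) + 2 * 2 ^ n"
    by (simp add: sum.distrib sum_distrib_left[symmetric] Suc sum_walk_sum_power2 card_bool_lists)
  finally show ?case
    by (simp add: algebra_simps power2_eq_square)
qed simp

lemma card_bool_lists_map_Not:
  "card {xs\<in>bool_lists n. P (map Not xs)} = card {xs\<in>bool_lists n. P xs}"
proof -
  have "bij_betw (map Not) {xs\<in>bool_lists n. P (map Not xs)} {xs\<in>bool_lists n. P xs}"
    by (rule bij_betw_byWitness[where f' = "map Not"]) (auto simp: bool_lists_def comp_def)
  then show ?thesis by (rule bij_betw_same_card)
qed

lemma paley_zygmund_card: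
  fixes e :: "'a \<Rightarrow> real" and c :: real
  assumes "finite I" "0 \<le> c" "c * card I \<le> (\<Sum>i\<in>I. e i ^ 2)"
  shows "((\<Sum>i\<in>I. e i ^ 2) - c * card I) ^ 2 \<le> (\<Sum>i\<in>I. e i ^ 4) * card {i\<in>I. c \<le> e i ^ 2}"
proof -
  define J where "J = {i\<in>I. c \<le> e i ^ 2}"
  have "finite J" "J \<subseteq> I" using assms(1) by (auto simp: J_def)
  have "(\<Sum>i\<in>I - J. e i ^ 2) \<le> (\<Sum>i\<in>I - J. c)"
    by (rule sum_mono) (auto simp: J_def)
  also have "\<dots> \<le> c * card I"
    using card_mono[OF assms(1), of "I - J"] assms(2) by (simp add: mult.commute mult_left_mono)
  finally have "(\<Sum>i\<in>I. e i ^ 2) - c * card I \<le> (\<Sum>i\<in>J. (e i ^ 2))"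
    using sum.subset_diff[OF \<open>J \<subseteq> I\<close> assms(1), of "\<lambda>i. e i ^ 2"] by linarith
  then have "((\<Sum>i\<in>I. e i ^ 2) - c * card I) ^ 2 \<le> (\<Sum>i\<in>J. e i ^ 2) ^ 2"
    using assms(3) by (intro power_mono) auto
  also have "\<dots> \<le> (\<Sum>i\<in>J. (e i ^ 2) ^ 2) * card J"
    by (rule sum_squared_le_sum_of_squares)
  also have "\<dots> \<le> (\<Sum>i\<in>I. e i ^ 4) * card J"
  proof -
    have "(\<Sum>i\<in>J. e i ^ 4) \<le> (\<Sum>i\<in>I. e i ^ 4)"
      using assms(1) \<open>J \<subseteq> I\<close> by (rule sum_mono2) (simp add: zero_le_even_power)
    then show ?thesis by (simp add: mult_right_mono flip: power_mult)
  qed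
  finally show ?thesis by (simp add: J_def)
qed

lemma card_walk_sum_large_ge:
  assumes "n > 0"
  shows "2 ^ n / 24 \<le> real (card {xs\<in>bool_lists n. 0 \<le> walk_sum xs \<and> real n \<le> 2 * real_of_int (walk_sum xs) ^ 2})"
proof -
  let ?e = "\<lambda>xs. real_of_int (walk_sum xs)"
  let ?P = "{xs\<in>bool_lists n. 0 \<le> walk_sum xs \<and> real n \<le> 2 * ?e xs ^ 2}"
  let ?N = "{xs\<in>bool_lists n. 0 \<le> walk_sum (map Not xs) \<and> real n \<le> 2 * ?e (map Not xs) ^ 2}"
  have "(real n * 2 ^ n / 2) ^ 2 \<le> (3 * real n ^ 2 - 2 * real n) * 2 ^ n
          * card {xs\<in>bool_lists n. real n / 2 \<le> ?e xs ^ 2}"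
    using paley_zygmund_card[of "bool_lists n" "real n / 2" ?e]
    by (simp add: sum_walk_sum_power2 sum_walk_sum_power4 card_bool_lists)
  also have "\<dots> \<le> 3 * real n ^ 2 * 2 ^ n * card {xs\<in>bool_lists n. real n / 2 \<le> ?e xs ^ 2}"
    by (intro mult_right_mono) auto
  finally have "2 ^ n / 12 \<le> real (card {xs\<in>bool_lists n. real n / 2 \<le> ?e xs ^ 2})"
    using assms by (simp add: power2_eq_square power_mult_distrib field_simps)
  also have "card {xs\<in>bool_lists n. real n / 2 \<le> ?e xs ^ 2} \<le> card (?P \<union> ?N)"
    by (rule card_mono) auto
  also have "\<dots> \<le> card ?P + card ?N"
    by (rule card_Un_le)
  finally show ?thesis
    using card_bool_lists_map_Not[of n "\<lambda>xs. 0 \<le> walk_sum xs \<and> real n \<le> 2 * ?e xs ^ 2"] by simp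
qed

lemma sum_shifted_walk_sum_power2:
  "(\<Sum>xs\<in>bool_lists n. (c + real_of_int (walk_sum xs)) ^ 2) = (c ^ 2 + real n) * 2 ^ n"
proof -
  have "(\<Sum>xs\<in>bool_lists n. (c + real_of_int (walk_sum xs)) ^ 2)
      = (\<Sum>xs\<in>bool_lists n. c ^ 2 + 2 * c * real_of_int (walk_sum xs) + real_of_int (walk_sum xs) ^ 2)"
    by (simp add: power2_eq_square algebra_simps)
  also have "\<dots> = (c ^ 2 + real n) * 2 ^ n"
    by (simp add: sum.distrib sum_distrib_left[symmetric] sum_distrib_right[symmetric] sum_walk_sum
        sum_walk_sum_power2 card_bool_lists algebra_simps)
  finally show ?thesis .
qed

definition walk_reaches :: "real \<Rightarrow> real \<Rightarrow> bool list \<Rightarrow> bool" where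
  "walk_reaches t c xs \<longleftrightarrow> (\<exists>k\<le>length xs. t \<le> \<bar>c + real_of_int (walk_sum (take k xs))\<bar>)"

lemma walk_reaches_Nil [simp]: "walk_reaches t c [] \<longleftrightarrow> t \<le> \<bar>c\<bar>"
  by (simp add: walk_reaches_def)

lemma walk_sum_take_Suc_Cons:
  "c + real_of_int (walk_sum (take (Suc k) (b # xs)))
     = c + (if b then 1 else -1) + real_of_int (walk_sum (take k xs))"
  by (cases b) simp_all

lemma walk_reaches_Cons:
  "walk_reaches t c (b # xs) \<longleftrightarrow> t \<le> \<bar>c\<bar> \<or> walk_reaches t (c + (if b then 1 else -1)) xs"
proof -
  have "(\<exists>k\<le>Suc (length xs). P k) \<longleftrightarrow> P 0 \<or> (\<exists>k\<le>length xs. P (Suc k))" for P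
    using Ex_less_Suc2[of "Suc (length xs)" P] by (simp add: less_Suc_eq_le)
  then show ?thesis
    unfolding walk_reaches_def length_Cons
    by (simp only: walk_sum_take_Suc_Cons take_0 walk_sum_Nil of_int_0 add_0_right)
qed

lemma sum_walk_reaches_Suc:
  assumes "\<bar>c\<bar> < t"
  shows "(\<Sum>xs\<in>bool_lists (Suc n). if walk_reaches t c xs then g (c + real_of_int (walk_sum xs)) else 0)
    = (\<Sum>xs\<in>bool_lists n. if walk_reaches t (c + 1) xs then g (c + 1 + real_of_int (walk_sum xs)) else 0)
    + (\<Sum>xs\<in>bool_lists n. if walk_reaches t (c - 1) xs then g (c - 1 + real_of_int (walk_sum xs)) else 0)"
proof -
  have "walk_reaches t c (True # xs) = walk_reaches t (c + 1) xs"
    "walk_reaches t c (False # xs) = walk_reaches t (c - 1) xs"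
    "c + real_of_int (walk_sum (True # xs)) = c + 1 + real_of_int (walk_sum xs)"
    "c + real_of_int (walk_sum (False # xs)) = c - 1 + real_of_int (walk_sum xs)" for xs
    using assms by (simp_all add: walk_reaches_Cons)
  then show ?thesis
    by (simp only: sum_bool_lists_Suc sum.distrib)
qed

lemma power2_le_power2_abs: "0 \<le> t \<Longrightarrow> t \<le> \<bar>c\<bar> \<Longrightarrow> t ^ 2 \<le> (c::real) ^ 2"
  by (metis abs_le_square_iff abs_of_nonneg)

text \<open>Kolmogorov's maximal inequality for the walk started at \<open>c\<close>. Once \<open>t \<le> \<bar>c\<bar>\<close>
  every walk counts and the right-hand side is the full second moment; otherwise both sides
  split according to the first step.\<close>
lemma kolmogorov_walk_reaches:
  assumes "0 \<le> t"
  shows "(\<Sum>xs\<in>bool_lists n. if walk_reaches t c xs then t ^ 2 else 0)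
       \<le> (\<Sum>xs\<in>bool_lists n. if walk_reaches t c xs then (c + real_of_int (walk_sum xs)) ^ 2 else 0)"
proof (induct n arbitrary: c)
  case 0
  show ?case using assms by (simp add: power2_le_power2_abs)
next
  case (Suc n)
  show ?case
  proof (cases "t \<le> \<bar>c\<bar>")
    case True
    then have "walk_reaches t c xs" for xs
      unfolding walk_reaches_def by (intro exI[of _ 0]) simp
    moreover have "t ^ 2 * 2 ^ Suc n \<le> (c ^ 2 + real (Suc n)) * 2 ^ Suc n"
      using power2_le_power2_abs[OF assms True] by (intro mult_right_mono) simp_all
    ultimately show ?thesis
      by (simp add: sum_shifted_walk_sum_power2 card_bool_lists)
  next
    case False
    note split = sum_walk_reaches_Suc[OF False[unfolded not_le]]
    show ?thesis
      unfolding split[where g = "\<lambda>_. t ^ 2"] split[where g = "\<lambda>x. x ^ 2"]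
      by (rule add_mono[OF Suc Suc])
  qed
qed

lemma card_walk_reaches_le:
  assumes "0 < t"
  shows "real (card {xs\<in>bool_lists n. walk_reaches t 0 xs}) \<le> real n * 2 ^ n / t ^ 2"
proof -
  have "t ^ 2 * card {xs\<in>bool_lists n. walk_reaches t 0 xs}
      = (\<Sum>xs\<in>bool_lists n. if walk_reaches t 0 xs then t ^ 2 else 0)"
    by (simp add: sum.If_cases Int_def)
  also have "\<dots> \<le> (\<Sum>xs\<in>bool_lists n. if walk_reaches t 0 xs then real_of_int (walk_sum xs) ^ 2 else 0)"
    using kolmogorov_walk_reaches[where c = 0, of t n] assms by (simp only: add_0_left less_imp_le)
  also have "\<dots> \<le> (\<Sum>xs\<in>bool_lists n. real_of_int (walk_sum xs) ^ 2)"
    by (rule sum_mono) simp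
  finally show ?thesis
    using assms by (simp add: sum_walk_sum_power2 field_simps)
qed

section \<open>Concatenations of confined walks\<close>

definition confined_walks :: "real \<Rightarrow> real \<Rightarrow> nat \<Rightarrow> bool list set" where
  "confined_walks a t l = {xs\<in>bool_lists l. a \<le> walk_sum xs \<and> \<not> walk_reaches t 0 xs}"

lemma confined_walksD:
  fixes a t :: real
  assumes "xs \<in> confined_walks a t l"
  shows "length xs = l" "a \<le> walk_sum xs" "\<And>k. k \<le> l \<Longrightarrow> \<bar>real_of_int (walk_sum (take k xs))\<bar> < t"
  using assms by (auto simp: confined_walks_def walk_reaches_def bool_lists_def)

lemma finite_confined_walks [simp]: "finite (confined_walks a t l)"
  by (simp add: confined_walks_def)

lemma card_confined_walks_ge:
  assumes "l > 0" "0 \<le> a" "a ^ 2 \<le> real l / 2" "t > 0" "48 * real l \<le> t ^ 2"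
  shows "2 ^ l / 48 \<le> real (card (confined_walks a t l))"
proof -
  let ?large = "{xs\<in>bool_lists l. 0 \<le> walk_sum xs \<and> real l \<le> 2 * real_of_int (walk_sum xs) ^ 2}"
  let ?reach = "{xs\<in>bool_lists l. walk_reaches t 0 xs}"
  have "?large \<subseteq> confined_walks a t l \<union> ?reach"
  proof
    fix xs assume xs: "xs \<in> ?large"
    then have "a ^ 2 \<le> real_of_int (walk_sum xs) ^ 2"
      using assms(3) by simp
    then have "a \<le> walk_sum xs"
      by (rule power2_le_imp_le) (use xs in simp)
    with xs show "xs \<in> confined_walks a t l \<union> ?reach"
      by (cases "walk_reaches t 0 xs") (simp_all add: confined_walks_def)
  qed
  then have "card ?large \<le> card (confined_walks a t l \<union> ?reach)"
    by (rule card_mono[rotated]) simp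
  also have "\<dots> \<le> card (confined_walks a t l) + card ?reach"
    by (rule card_Un_le)
  finally have "card ?large \<le> card (confined_walks a t l) + card ?reach" .
  moreover have "real l * 2 ^ l / t ^ 2 \<le> 2 ^ l / 48"
    using assms(4,5) by (simp add: field_simps)
  ultimately show ?thesis
    using card_walk_sum_large_ge[OF assms(1)] card_walk_reaches_le[OF assms(4), of l] by linarith
qed

fun concat_walks :: "real \<Rightarrow> real \<Rightarrow> nat list \<Rightarrow> bool list set" where
  "concat_walks a t [] = {[]}"
| "concat_walks a t (l # ls) = (\<lambda>(x, y). x @ y) ` (confined_walks a t l \<times> concat_walks a t ls)"

lemma length_concat_walks: "z \<in> concat_walks a t ls \<Longrightarrow> length z = sum_list ls"
  by (induct ls arbitrary: z) (auto dest: confined_walksD(1))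

lemma finite_concat_walks [simp]: "finite (concat_walks a t ls)"
  by (induct ls) auto

lemma card_concat_walks_Cons:
  "card (concat_walks a t (l # ls)) = card (confined_walks a t l) * card (concat_walks a t ls)"
proof -
  have "inj_on (\<lambda>(x, y). x @ y) (confined_walks a t l \<times> concat_walks a t ls)"
    by (rule inj_onI, clarify) (simp add: append_eq_append_conv confined_walksD(1))
  then show ?thesis by (simp add: card_image card_cartesian_product)
qed

lemma card_concat_walks_ge:
  assumes "\<forall>l\<in>set ls. 2 ^ l / 48 \<le> real (card (confined_walks a t l))"
  shows "2 ^ sum_list ls / 48 ^ length ls \<le> real (card (concat_walks a t ls))"
  using assms
proof (induct ls)
  case (Cons l ls)
  have "(2::real) ^ sum_list (l # ls) / 48 ^ length (l # ls)
      = (2 ^ l / 48) * (2 ^ sum_list ls / 48 ^ length ls)"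
    by (simp add: power_add)
  also have "\<dots> \<le> real (card (confined_walks a t l)) * real (card (concat_walks a t ls))"
    using Cons by (intro mult_mono) auto
  finally show ?case by (simp only: card_concat_walks_Cons of_nat_mult)
qed simp

lemma mult_div_le_add:
  fixes a :: real
  assumes "0 \<le> a" "0 < m" "d \<le> d' + m"
  shows "a * real (d div m) \<le> a * real (d' div m) + a"
proof -
  have "d div m \<le> (d' + m) div m" using assms(3) by (rule div_le_mono)
  then have "real (d div m) \<le> real (d' div m) + 1" using assms(2) by simp
  then have "a * real (d div m) \<le> a * (real (d' div m) + 1)" using assms(1) by (rule mult_left_mono)
  then show ?thesis by (simp add: distrib_left)
qed

text \<open>Each block ends at least \<open>a\<close> higher than it starts and never strays \<open>t\<close> from
  its start, so the walk climbs linearly in the number \<open>d div m\<close> of completed blocks.\<close>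
lemma walk_sum_take_concat_walks_ge:
  assumes "z \<in> concat_walks a t ls" "\<forall>l\<in>set ls. l \<le> m" "0 < m" "0 \<le> a" "0 \<le> t"
    "d \<le> length z"
  shows "a * real (d div m) - a - t \<le> walk_sum (take d z)"
  using assms
proof (induct ls arbitrary: z d)
  case (Cons l ls)
  then obtain x y where xy: "z = x @ y" "x \<in> confined_walks a t l" "y \<in> concat_walks a t ls"
    by auto
  have lx: "length x = l" "l \<le> m"
    using confined_walksD(1)[OF xy(2)] Cons.prems(2) by simp_all
  show ?case
  proof (cases "d \<le> l")
    case True
    have "a * real (d div m) \<le> a"
      using mult_div_le_add[of a m d 0] True lx Cons.prems by simp
    moreover have "- t < real_of_int (walk_sum (take d z))"
      using confined_walksD(3)[OF xy(2), of d] xy True lx by (simp add: abs_less_iff)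
    ultimately show ?thesis by linarith
  next
    case False
    have "a * real ((d - l) div m) - a - t \<le> walk_sum (take (d - l) y)"
      by (rule Cons.hyps[OF xy(3)]) (use Cons.prems xy lx False in auto)
    moreover have "a \<le> walk_sum x"
      by (rule confined_walksD(2)[OF xy(2)])
    moreover have "a * real (d div m) \<le> a * real ((d - l) div m) + a"
      using lx Cons.prems by (intro mult_div_le_add) auto
    moreover have "walk_sum (take d z) = walk_sum x + walk_sum (take (d - l) y)"
      using xy lx False by simp
    ultimately show ?thesis by linarith
  qed
qed simp

lemma walk_sum_infix_concat_walks_ge:
  assumes "z \<in> concat_walks a t ls" "\<forall>l\<in>set ls. l \<le> m" "0 < m" "0 \<le> a" "0 \<le> t"
    "i + d \<le> length z"
  shows "a * real (d div m) - a - 2 * t \<le> walk_sum (take d (drop i z))"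
  using assms
proof (induct ls arbitrary: z i)
  case (Cons l ls)
  then obtain x y where xy: "z = x @ y" "x \<in> confined_walks a t l" "y \<in> concat_walks a t ls"
    by auto
  have lx: "length x = l"
    by (rule confined_walksD(1)[OF xy(2)])
  show ?case
  proof (cases "l \<le> i")
    case True
    have "take d (drop (i - l) y) = take d (drop i z)"
      using xy lx True by simp
    moreover have "a * real (d div m) - a - 2 * t \<le> walk_sum (take d (drop (i - l) y))"
      by (rule Cons.hyps[OF xy(3)]) (use Cons.prems xy lx True in auto)
    ultimately show ?thesis by simp
  next
    case False
    have "take i z = take i x"
      using xy lx False by simp
    then have "real_of_int (walk_sum (take (i + d) z))
        = real_of_int (walk_sum (take i x)) + real_of_int (walk_sum (take d (drop i z)))"
      by (simp add: take_add)
    moreover have "real_of_int (walk_sum (take i x)) < t"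
      using confined_walksD(3)[OF xy(2)] False lx by (simp add: abs_less_iff)
    moreover have "a * real ((i + d) div m) - a - t \<le> walk_sum (take (i + d) z)"
      by (rule walk_sum_take_concat_walks_ge[OF Cons.prems(1-5)]) (use Cons.prems in simp)
    moreover have "a * real (d div m) \<le> a * real ((i + d) div m)"
      using Cons.prems by (intro mult_left_mono) (auto intro: div_le_mono)
    ultimately show ?thesis by linarith
  qed
qed simp

section \<open>Words as pairs of bit strings\<close>

definition is_GC :: "nuc \<Rightarrow> bool" where
  "is_GC x \<longleftrightarrow> x = G \<or> x = C"

definition is_AC :: "nuc \<Rightarrow> bool" where
  "is_AC x \<longleftrightarrow> x = A \<or> x = C"

definition nuc_of :: "bool \<Rightarrow> bool \<Rightarrow> nuc" where
  "nuc_of g u = (if g then (if u then C else G) else (if u then A else T))"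

lemma is_GC_nuc_of [simp]: "is_GC (nuc_of g u) = g"
  and is_AC_nuc_of [simp]: "is_AC (nuc_of g u) = u"
  by (simp_all add: nuc_of_def is_GC_def is_AC_def)

lemma nuc_of_is_GC_is_AC [simp]: "nuc_of (is_GC x) (is_AC x) = x"
  by (cases x) (simp_all add: nuc_of_def is_GC_def is_AC_def)

lemma is_AC_compl [simp]: "is_AC (compl x) = (\<not> is_AC x)"
  by (cases x) (simp_all add: is_AC_def)

definition nucs_of :: "bool list \<Rightarrow> bool list \<Rightarrow> nuc list" where
  "nucs_of gs us = map2 nuc_of gs us"

lemma length_nucs_of [simp]: "length gs = length us \<Longrightarrow> length (nucs_of gs us) = length gs"
  by (simp add: nucs_of_def)

lemma map_is_GC_nucs_of [simp]: "length gs = length us \<Longrightarrow> map is_GC (nucs_of gs us) = gs"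
  and map_is_AC_nucs_of [simp]: "length gs = length us \<Longrightarrow> map is_AC (nucs_of gs us) = us"
  by (induct gs us rule: list_induct2) (simp_all add: nucs_of_def)

lemma nucs_of_is_GC_is_AC: "nucs_of (map is_GC w) (map is_AC w) = w"
  by (induct w) (simp_all add: nucs_of_def)

lemma balanced_iff_count_is_GC: "balanced w \<longleftrightarrow> 2 * count_list (map is_GC w) True = length w"
proof -
  have "count_list (map is_GC w) True = length (filter (\<lambda>x. x = G \<or> x = C) w)"
    by (induct w) (auto simp: is_GC_def)
  then show ?thesis by (simp add: balanced_def)
qed

lemma inj_on_nucs_of: "inj_on (\<lambda>(g, u). nucs_of g u) (bool_lists n \<times> bool_lists n)"
  by (rule inj_on_inverseI[where g = "\<lambda>w. (map is_GC w, map is_AC w)"]) (auto simp: bool_lists_def)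

definition balanced_bits :: "nat \<Rightarrow> bool list set" where
  "balanced_bits n = {g\<in>bool_lists n. 2 * count_list g True = n}"

lemma card_balanced_bits:
  assumes "even n"
  shows "card (balanced_bits n) = n choose (n div 2)"
proof -
  have "balanced_bits n = {g\<in>bool_lists n. count_list g True = n div 2}"
    using assms by (auto simp: balanced_bits_def)
  then show ?thesis by (simp add: card_bool_lists_count_True)
qed

definition balanced_words :: "nat \<Rightarrow> nuc list set" where
  "balanced_words n = {w. length w = n \<and> balanced w}"

lemma balanced_words_eq_image_nucs_of:
  "balanced_words n = (\<lambda>(g, u). nucs_of g u) ` (balanced_bits n \<times> bool_lists n)"
proof (intro equalityI subsetI)
  fix w assume "w \<in> balanced_words n"
  then have "(map is_GC w, map is_AC w) \<in> balanced_bits n \<times> bool_lists n"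
    by (simp add: balanced_words_def balanced_bits_def bool_lists_def balanced_iff_count_is_GC)
  then show "w \<in> (\<lambda>(g, u). nucs_of g u) ` (balanced_bits n \<times> bool_lists n)"
    by (force simp: nucs_of_is_GC_is_AC)
qed (auto simp: balanced_words_def balanced_bits_def bool_lists_def balanced_iff_count_is_GC)

lemma card_balanced_words:
  assumes "even n"
  shows "card (balanced_words n) = (n choose (n div 2)) * 2 ^ n"
proof -
  have "inj_on (\<lambda>(g, u). nucs_of g u) (balanced_bits n \<times> bool_lists n)"
    by (rule inj_on_subset[OF inj_on_nucs_of[of n]]) (auto simp: balanced_bits_def)
  then show ?thesis
    unfolding balanced_words_eq_image_nucs_of
    by (simp add: card_image card_cartesian_product card_balanced_bits[OF assms] card_bool_lists)
qed

section \<open>The upper bound\<close>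

lemma length_filter_rotate: "length (filter P (rotate r w)) = length (filter P w)"
proof -
  have "length (filter P w) = length (filter P (take (r mod length w) w @ drop (r mod length w) w))"
    by simp
  then show ?thesis
    by (simp only: rotate_drop_take filter_append length_append add.commute)
qed

lemma balanced_rotate [simp]: "balanced (rotate r w) = balanced w"
  by (simp add: balanced_def length_filter_rotate)

text \<open>A nontrivial rotation \<open>a\<close> of \<open>b\<close> starts with a proper suffix of \<open>b\<close>.\<close>
lemma MU_rotate_eq_imp:
  assumes "MU n K" "a \<in> K" "b \<in> K" "length b = n" "d < n" "a = rotate d b"
  shows "d = 0"
proof (rule ccontr)
  assume "d \<noteq> 0"
  have mu: "\<forall>l. 1 \<le> l \<and> l < n \<longrightarrow> take l a \<noteq> drop (n - l) b"
    using assms(1-3) by (simp add: MU_def)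
  have "take (n - d) a = drop d b"
    using assms(4-6) by (simp add: rotate_drop_take)
  moreover have "take (n - d) a \<noteq> drop (n - (n - d)) b"
    using mu[rule_format, of "n - d"] \<open>d \<noteq> 0\<close> \<open>d < n\<close> by simp
  ultimately show False
    using \<open>d < n\<close> by simp
qed

lemma MU_inj_on_rotate:
  assumes "MU n K" "K \<subseteq> {w. length w = n}"
  shows "inj_on (\<lambda>(w, r). rotate r w) (K \<times> {..<n})"
proof -
  have eq: "a = b \<and> r = r'"
    if "a \<in> K" "b \<in> K" "r \<le> r'" "r' < n" "rotate r a = rotate r' b" for a b r r'
  proof -
    have ln: "length a = n" "length b = n"
      using that assms(2) by auto
    have "a = rotate (n - r + r) a"
      using ln that(3,4) by simp
    also have "\<dots> = rotate (n - r + r') b"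
      using that(5) by (simp flip: rotate_rotate)
    also have "\<dots> = rotate ((r' - r) + n) b"
      using that(3,4) by (simp add: add.commute)
    also have "\<dots> = rotate (r' - r) b"
      using ln by (simp add: rotate_add)
    finally have a: "a = rotate (r' - r) b" .
    then have "r' - r = 0"
      using MU_rotate_eq_imp[OF assms(1) that(1,2), of "r' - r"] ln that(4) by linarith
    then show ?thesis
      using a that(3) by simp
  qed
  show ?thesis
  proof (rule inj_onI)
    fix x y assume "x \<in> K \<times> {..<n}" "y \<in> K \<times> {..<n}"
      and "(\<lambda>(w, r). rotate r w) x = (\<lambda>(w, r). rotate r w) y"
    moreover obtain a r b r' where "x = (a, r)" "y = (b, r')"
      by fastforce
    ultimately show "x = y"
      using eq[of a b r r'] eq[of b a r' r] by (cases "r \<le> r'") auto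
  qed
qed

lemma card_MU_balanced_le:
  assumes "K \<subseteq> {w. length w = n}" "balanced_code K" "MU n K" "even n"
  shows "card K * n \<le> (n choose (n div 2)) * 2 ^ n"
proof -
  have "(\<lambda>(w, r). rotate r w) ` (K \<times> {..<n}) \<subseteq> balanced_words n"
    using assms(1,2) by (auto simp: balanced_words_def balanced_code_def)
  moreover have "finite (balanced_words n)"
    unfolding balanced_words_eq_image_nucs_of by (simp add: balanced_bits_def)
  ultimately have "card (K \<times> {..<n}) \<le> card (balanced_words n)"
    using card_inj_on_le[OF MU_inj_on_rotate[OF assms(3,1)]] by blast
  then show ?thesis
    by (simp add: card_cartesian_product card_balanced_words[OF assms(4)])
qed

section \<open>The code\<close>

lemma not_sublist_replicate_snoc_True:
  assumes "\<not> sublist (replicate k False) z" "0 < k"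
  shows "\<not> sublist (replicate k False) (z @ [True])"
proof
  assume "sublist (replicate k False) (z @ [True])"
  then have "suffix (replicate k False) (z @ [True])"
    using assms(1) by (simp add: sublist_snoc)
  then obtain zs where "z @ [True] = zs @ replicate k False"
    by (auto simp: suffix_def)
  then have "last (z @ [True]) = last (zs @ replicate k False)"
    by simp
  then show False
    using assms(2) by simp
qed

lemma card_sublist_replicate_le:
  assumes "k \<le> N"
  shows "card {z\<in>bool_lists N. sublist (replicate k False) z} \<le> (N + 1) * 2 ^ (N - k)"
proof -
  let ?ins = "\<lambda>(p, s). p @ replicate k False @ s"
  have "{z\<in>bool_lists N. sublist (replicate k False) z}
      \<subseteq> (\<Union>i\<le>N - k. ?ins ` (bool_lists i \<times> bool_lists (N - k - i)))"
  proof
    fix z assume "z \<in> {z\<in>bool_lists N. sublist (replicate k False) z}"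
    then obtain p s where "z = p @ replicate k False @ s" "length z = N"
      by (auto simp: sublist_def bool_lists_def)
    then show "z \<in> (\<Union>i\<le>N - k. ?ins ` (bool_lists i \<times> bool_lists (N - k - i)))"
      by (auto simp: bool_lists_def intro!: bexI[of _ "length p"])
  qed
  then have "card {z\<in>bool_lists N. sublist (replicate k False) z}
      \<le> card (\<Union>i\<le>N - k. ?ins ` (bool_lists i \<times> bool_lists (N - k - i)))"
    by (intro card_mono) auto
  also have "\<dots> \<le> (\<Sum>i\<le>N - k. card (?ins ` (bool_lists i \<times> bool_lists (N - k - i))))"
    by (rule card_UN_le) simp
  also have "\<dots> \<le> (\<Sum>i\<le>N - k. card (bool_lists i \<times> bool_lists (N - k - i)))"
    by (intro sum_mono card_image_le) simp
  also have "\<dots> = (\<Sum>i\<le>N - k. 2 ^ (N - k))"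
    by (intro sum.cong) (simp_all add: card_cartesian_product card_bool_lists flip: power_add)
  also have "\<dots> \<le> (N + 1) * 2 ^ (N - k)"
    using assms by simp
  finally show ?thesis .
qed

definition header :: "nat \<Rightarrow> bool list" where
  "header k = replicate k False @ [True]"

lemma length_header [simp]: "length (header k) = k + 1"
  by (simp add: header_def)

text \<open>A prefix of one word equal to a suffix of the other either lies in the all-\<open>False\<close>
  head of the header, yet ends in the final \<open>True\<close>, or starts with \<open>k\<close> copies of \<open>False\<close>
  strictly inside the other word, where no run of \<open>k\<close> copies of \<open>False\<close> occurs.\<close>
lemma take_header_neq_drop_header:
  assumes ua: "ua = header k @ ya" and ub: "ub = header k @ yb @ [True]"
    and len: "length ua = n" "length ub = n"
    and run: "\<not> sublist (replicate k False) (yb @ [True])"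
    and l: "1 \<le> l" "l < n"
  shows "take l ua \<noteq> drop (n - l) ub"
proof
  assume eq: "take l ua = drop (n - l) ub"
  show False
  proof (cases "l \<le> k")
    case True
    then have "take l ua = replicate l False"
      using ua by (simp add: header_def)
    moreover have "last (drop (n - l) ub) = True" "drop (n - l) ub \<noteq> []"
      using l len ub by (simp_all add: last_drop)
    ultimately show False
      using eq l by (metis last_replicate not_one_le_zero)
  next
    case False
    define j where "j = n - l"
    have "take k (take l ua) = replicate k False"
      using False ua by (simp add: header_def min_def)
    then have run_j: "take k (drop j ub) = replicate k False"
      using eq by (simp add: j_def)
    have j: "1 \<le> j" "j + l = n" "length yb + k + 2 = n"
      using l len ub by (simp_all add: j_def header_def)
    show False
    proof (cases "k < j")
      case True
      then obtain e where "j = Suc (k + e)"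
        using less_imp_Suc_add by blast
      then have "drop j ub = drop e (yb @ [True])"
        using ub by (simp add: header_def)
      then have "sublist (replicate k False) (yb @ [True])"
        by (metis run_j sublist_drop sublist_order.order_trans sublist_take)
      then show False
        using run by contradiction
    next
      case False
      then have "drop j ub = replicate (k - j) False @ True # yb @ [True]"
        using ub by (simp add: header_def)
      then have "take k (drop j ub) ! (k - j) = True"
        using j False by (simp add: nth_append)
      then show False
        using run_j j False by simp
    qed
  qed
qed

lemma walk_sum_infix_append_left:
  assumes "i + d \<le> length (x @ v)"
  obtains i' d' where "i' + d' \<le> length v" "d \<le> d' + length x"
    "walk_sum (take d' (drop i' v)) - int (length x) \<le> walk_sum (take d (drop i (x @ v)))"
proof (cases "length x \<le> i")
  case True
  then show ?thesis
    using assms that[of "i - length x" d] by simp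
next
  case False
  then have "take d (drop i (x @ v)) = take d (drop i x) @ take (d - (length x - i)) v"
    by simp
  moreover have "- int (length x) \<le> walk_sum (take d (drop i x))"
    using walk_sum_ge[of "take d (drop i x)"] by simp
  ultimately show ?thesis
    using assms False that[of 0 "d - (length x - i)"] by simp
qed

lemma walk_sum_infix_append_right:
  assumes "i + d \<le> length (v @ w)"
  obtains i' d' where "i' + d' \<le> length v" "d \<le> d' + length w"
    "walk_sum (take d' (drop i' v)) - int (length w) \<le> walk_sum (take d (drop i (v @ w)))"
proof (cases "length v \<le> i")
  case True
  then have "drop i (v @ w) = drop (i - length v) w"
    by simp
  moreover have "- int (length w) \<le> walk_sum (take d (drop (i - length v) w))"
    using walk_sum_ge[of "take d (drop (i - length v) w)"] by simp
  ultimately show ?thesis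
    using assms True that[of "length v" 0] by simp
next
  case False
  define d' where "d' = min d (length v - i)"
  have "take d (drop i (v @ w)) = take d' (drop i v) @ take (d - (length v - i)) w"
    using False by (simp add: d'_def min_def)
  moreover have "- int (length w) \<le> walk_sum (take (d - (length v - i)) w)"
    using walk_sum_ge[of "take (d - (length v - i)) w"] by simp
  ultimately show ?thesis
    using assms False that[of i d'] by (simp add: d'_def)
qed

text \<open>A window of length \<open>f\<close> of a marked walk contains at least \<open>f - (k + 2)\<close> consecutive
  steps of the concatenated walk, and the remaining \<open>k + 2\<close> steps cost at most \<open>k + 2\<close>.\<close>
lemma walk_sum_window_marked_pos:
  assumes z: "z \<in> concat_walks a t ls" and ls: "\<forall>l\<in>set ls. l \<le> m" "0 < m" "0 \<le> a" "0 \<le> t"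
    and climb: "\<And>d. f \<le> d + (k + 2) \<Longrightarrow> real (k + 2) + a + 2 * t < a * real (d div m)"
    and i: "i + f \<le> length (header k @ z @ [True])"
  shows "0 < walk_sum (take f (drop i (header k @ z @ [True])))"
proof -
  obtain i1 d1 where 1: "i1 + d1 \<le> length (z @ [True])" "f \<le> d1 + length (header k)"
    "walk_sum (take d1 (drop i1 (z @ [True]))) - int (length (header k))
       \<le> walk_sum (take f (drop i (header k @ z @ [True])))"
    using walk_sum_infix_append_left[OF i] .
  obtain i2 d2 where 2: "i2 + d2 \<le> length z" "d1 \<le> d2 + 1"
    "walk_sum (take d2 (drop i2 z)) - 1 \<le> walk_sum (take d1 (drop i1 (z @ [True])))"
    using walk_sum_infix_append_right[OF 1(1)] by auto
  have "a * real (d2 div m) - a - 2 * t \<le> walk_sum (take d2 (drop i2 z))"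
    by (rule walk_sum_infix_concat_walks_ge[OF z ls 2(1)])
  moreover have "real (k + 2) + a + 2 * t < a * real (d2 div m)"
    using 1(2) 2(2) by (intro climb) (simp add: header_def)
  ultimately show ?thesis
    using 1(3) 2(3) by (simp add: header_def)
qed

definition marked_walks :: "nat \<Rightarrow> real \<Rightarrow> real \<Rightarrow> nat list \<Rightarrow> bool list set" where
  "marked_walks k a t ls =
     (\<lambda>z. header k @ z @ [True]) ` {z\<in>concat_walks a t ls. \<not> sublist (replicate k False) z}"

lemma length_marked_walks: "u \<in> marked_walks k a t ls \<Longrightarrow> length u = k + 2 + sum_list ls"
  by (auto simp: marked_walks_def header_def length_concat_walks)

lemma card_marked_walks:
  "card (marked_walks k a t ls) = card {z\<in>concat_walks a t ls. \<not> sublist (replicate k False) z}"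
  unfolding marked_walks_def by (rule card_image) (simp add: inj_on_def)

lemma card_marked_walks_ge:
  assumes "\<forall>l\<in>set ls. 2 ^ l / 48 \<le> real (card (confined_walks a t l))" "k \<le> sum_list ls"
  shows "2 ^ sum_list ls / 48 ^ length ls - real ((sum_list ls + 1) * 2 ^ (sum_list ls - k))
           \<le> real (card (marked_walks k a t ls))"
proof -
  let ?N = "sum_list ls" and ?Z = "concat_walks a t ls"
  have "?Z \<subseteq> {z\<in>?Z. \<not> sublist (replicate k False) z} \<union> {z\<in>bool_lists ?N. sublist (replicate k False) z}"
    by (auto simp: bool_lists_def length_concat_walks)
  then have "card ?Z \<le> card ({z\<in>?Z. \<not> sublist (replicate k False) z}
      \<union> {z\<in>bool_lists ?N. sublist (replicate k False) z})"
    by (rule card_mono[rotated]) simp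
  also have "\<dots> \<le> card {z\<in>?Z. \<not> sublist (replicate k False) z}
      + card {z\<in>bool_lists ?N. sublist (replicate k False) z}"
    by (rule card_Un_le)
  finally have "card ?Z \<le> card {z\<in>?Z. \<not> sublist (replicate k False) z}
      + card {z\<in>bool_lists ?N. sublist (replicate k False) z}" .
  then show ?thesis
    using card_concat_walks_ge[OF assms(1)] card_sublist_replicate_le[OF assms(2)]
    unfolding card_marked_walks by linarith
qed

lemma card_marked_walks_half:
  assumes "\<forall>l\<in>set ls. 2 ^ l / 48 \<le> real (card (confined_walks a t l))" "k \<le> sum_list ls"
    and "2 * 48 ^ length ls * (sum_list ls + 1) \<le> 2 ^ k"
  shows "2 ^ sum_list ls / (2 * 48 ^ length ls) \<le> real (card (marked_walks k a t ls))"
proof -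
  let ?N = "sum_list ls" and ?s = "length ls"
  have "2 * 48 ^ ?s * (?N + 1) * 2 ^ (?N - k) \<le> (2::nat) ^ k * 2 ^ (?N - k)"
    using assms(3) by (rule mult_le_mono1)
  also have "\<dots> = 2 ^ ?N"
    using assms(2) by (simp flip: power_add)
  finally have "real (2 * 48 ^ ?s * (?N + 1) * 2 ^ (?N - k)) \<le> real ((2::nat) ^ ?N)"
    by (rule of_nat_mono)
  then have "real ((?N + 1) * 2 ^ (?N - k)) * (2 * 48 ^ ?s) \<le> 2 ^ ?N"
    by (simp only: of_nat_mult of_nat_power of_nat_numeral mult_ac)
  then have "real ((?N + 1) * 2 ^ (?N - k)) \<le> 2 ^ ?N / (2 * 48 ^ ?s)"
    by (subst pos_le_divide_eq) simp_all
  moreover have "(2::real) ^ ?N / 48 ^ ?s - 2 ^ ?N / (2 * 48 ^ ?s) = 2 ^ ?N / (2 * 48 ^ ?s)"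
    by simp
  ultimately show ?thesis
    using card_marked_walks_ge[OF assms(1,2)] by linarith
qed

definition dna_code :: "nat \<Rightarrow> real \<Rightarrow> real \<Rightarrow> nat list \<Rightarrow> nuc list set" where
  "dna_code k a t ls =
     (\<lambda>(g, u). nucs_of g u) ` (balanced_bits (k + 2 + sum_list ls) \<times> marked_walks k a t ls)"

lemma dna_codeE:
  assumes "w \<in> dna_code k a t ls"
  obtains u z where "length w = k + 2 + sum_list ls" "balanced w" "map is_AC w = u"
    "u = header k @ z @ [True]" "z \<in> concat_walks a t ls" "\<not> sublist (replicate k False) z"
proof -
  let ?n = "k + 2 + sum_list ls"
  obtain g u where w: "w = nucs_of g u" "g \<in> balanced_bits ?n" "u \<in> marked_walks k a t ls"
    using assms by (auto simp: dna_code_def)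
  then have "length g = ?n" "length u = ?n"
    by (simp_all add: balanced_bits_def bool_lists_def length_marked_walks)
  moreover obtain z where "u = header k @ z @ [True]" "z \<in> concat_walks a t ls"
    "\<not> sublist (replicate k False) z"
    using w(3) by (auto simp: marked_walks_def)
  ultimately show ?thesis
    using w that[of u z] by (simp add: balanced_iff_count_is_GC balanced_bits_def)
qed

lemma card_dna_code:
  assumes "n = k + 2 + sum_list ls" "even n"
  shows "card (dna_code k a t ls) = (n choose (n div 2)) * card (marked_walks k a t ls)"
proof -
  have "inj_on (\<lambda>(g, u). nucs_of g u) (balanced_bits n \<times> marked_walks k a t ls)"
    by (rule inj_on_subset[OF inj_on_nucs_of[of n]])
      (auto simp: balanced_bits_def bool_lists_def length_marked_walks assms(1))
  then show ?thesis
    unfolding dna_code_def assms(1)[symmetric]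
    by (simp only: card_image card_cartesian_product card_balanced_bits[OF assms(2)])
qed

lemma MU_dna_code:
  assumes "0 < k"
  shows "MU (k + 2 + sum_list ls) (dna_code k a t ls)"
  unfolding MU_def
proof (intro ballI allI impI)
  fix wa wb l
  assume wa: "wa \<in> dna_code k a t ls" and wb: "wb \<in> dna_code k a t ls"
    and l: "1 \<le> l \<and> l < k + 2 + sum_list ls"
  obtain ua za where a: "length wa = k + 2 + sum_list ls" "balanced wa" "map is_AC wa = ua"
    "ua = header k @ za @ [True]" "za \<in> concat_walks a t ls" "\<not> sublist (replicate k False) za"
    by (rule dna_codeE[OF wa])
  obtain ub zb where b: "length wb = k + 2 + sum_list ls" "balanced wb" "map is_AC wb = ub"
    "ub = header k @ zb @ [True]" "zb \<in> concat_walks a t ls" "\<not> sublist (replicate k False) zb"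
    by (rule dna_codeE[OF wb])
  have "take l ua \<noteq> drop (k + 2 + sum_list ls - l) ub"
  proof (rule take_header_neq_drop_header[OF a(4) b(4)])
    show "length ua = k + 2 + sum_list ls" "length ub = k + 2 + sum_list ls"
      using a(1,3) b(1,3) by auto
    show "\<not> sublist (replicate k False) (zb @ [True])"
      by (rule not_sublist_replicate_snoc_True[OF b(6) assms])
  qed (use l in simp_all)
  then show "take l wa \<noteq> drop (k + 2 + sum_list ls - l) wb"
    unfolding a(3)[symmetric] b(3)[symmetric] by (metis take_map drop_map)
qed

lemma walk_sum_map_is_AC_compl: "walk_sum (map is_AC (map compl w)) = - walk_sum (map is_AC w)"
  by (induct w) auto

text \<open>Mapping \<open>A, C \<mapsto> True\<close> and \<open>T, G \<mapsto> False\<close>, every window of a codeword has positive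
  walk sum while every window of a complement has negative walk sum; reversal does not
  change walk sums.\<close>
lemma APD_dna_code:
  assumes ls: "\<forall>l\<in>set ls. l \<le> m" "0 < m" "0 \<le> a" "0 \<le> t"
    and climb: "\<And>d. f \<le> d + (k + 2) \<Longrightarrow> real (k + 2) + a + 2 * t < a * real (d div m)"
  shows "APD f (k + 2 + sum_list ls) (dna_code k a t ls)"
proof -
  have pos: "0 < walk_sum (map is_AC (window w i f))"
    if asm: "w \<in> dna_code k a t ls" "1 \<le> i" "i \<le> k + 2 + sum_list ls + 1 - f" for w i
  proof -
    obtain u z where w: "length w = k + 2 + sum_list ls" "balanced w" "map is_AC w = u"
      "u = header k @ z @ [True]" "z \<in> concat_walks a t ls" "\<not> sublist (replicate k False) z"
      by (rule dna_codeE[OF asm(1)])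
    have "i - 1 + f \<le> length (header k @ z @ [True])"
      using length_concat_walks[OF w(5)] asm(2,3) by simp
    then have "0 < walk_sum (take f (drop (i - 1) (header k @ z @ [True])))"
      using walk_sum_window_marked_pos[OF w(5) ls] climb by blast
    moreover have "map is_AC (window w i f) = take f (drop (i - 1) (header k @ z @ [True]))"
      unfolding window_def w(4)[symmetric] w(3)[symmetric] by (simp flip: take_map drop_map)
    ultimately show ?thesis
      by simp
  qed
  show ?thesis
    unfolding APD_def
  proof (intro ballI allI impI conjI)
    fix wa wb i j
    assume "wa \<in> dna_code k a t ls" "wb \<in> dna_code k a t ls"
      and "1 \<le> i \<and> i \<le> k + 2 + sum_list ls + 1 - f \<and> 1 \<le> j \<and> j \<le> k + 2 + sum_list ls + 1 - f"
    then have "0 < walk_sum (map is_AC (window wa i f))" "0 < walk_sum (map is_AC (window wb j f))"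
      using pos by simp_all
    then have "walk_sum (map is_AC (map compl (window wa i f))) < 0"
      "0 < walk_sum (map is_AC (rev (window wb j f)))"
      unfolding walk_sum_map_is_AC_compl rev_map[symmetric] walk_sum_rev by simp_all
    then show "map compl (window wa i f) \<noteq> window wb j f"
      "map compl (window wa i f) \<noteq> rev (window wb j f)"
      using \<open>0 < walk_sum (map is_AC (window wb j f))\<close> by (metis less_asym)+
  qed
qed

lemma finite_words: "finite {w :: nuc list. length w = n}"
proof -
  have "(UNIV :: nuc set) = {A, T, C, G}"
    using nuc.exhaust by auto
  then have "finite (UNIV :: nuc set)"
    by (metis finite.emptyI finite_insert)
  then show ?thesis
    using finite_lists_length_eq[of "UNIV :: nuc set" n] by simp
qed

lemma finite_code_sizes:
  "finite {card K | K. K \<subseteq> {w. length w = n} \<and> APD f n K \<and> balanced_code K \<and> MU n K}"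
proof -
  have "{card K | K. K \<subseteq> {w. length w = n} \<and> APD f n K \<and> balanced_code K \<and> MU n K}
      \<subseteq> {..card {w :: nuc list. length w = n}}"
    using card_mono[OF finite_words] by auto
  then show ?thesis
    by (rule finite_subset) simp
qed

lemma card_le_A_max:
  assumes "K \<subseteq> {w. length w = n}" "APD f n K" "balanced_code K" "MU n K"
  shows "card K \<le> A_max f n"
  unfolding A_max_def using finite_code_sizes by (rule Max_ge) (use assms in blast)

lemma A_max_attained:
  obtains K where "A_max f n = card K" "K \<subseteq> {w. length w = n}" "APD f n K" "balanced_code K" "MU n K"
proof -
  have "card {} \<in> {card K | K. K \<subseteq> {w. length w = n} \<and> APD f n K \<and> balanced_code K \<and> MU n K}"
    by (auto simp: APD_def balanced_code_def MU_def intro!: exI[of _ "{}"])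
  then have "A_max f n \<in> {card K | K. K \<subseteq> {w. length w = n} \<and> APD f n K \<and> balanced_code K \<and> MU n K}"
    unfolding A_max_def using finite_code_sizes by (intro Max_in) auto
  then show ?thesis
    using that by blast
qed

lemma card_dna_code_le_A_max:
  assumes "0 < k" "\<forall>l\<in>set ls. l \<le> m" "0 < m" "0 \<le> a" "0 \<le> t"
    and "\<And>d. f \<le> d + (k + 2) \<Longrightarrow> real (k + 2) + a + 2 * t < a * real (d div m)"
  shows "card (dna_code k a t ls) \<le> A_max f (k + 2 + sum_list ls)"
proof (rule card_le_A_max)
  show "dna_code k a t ls \<subseteq> {w. length w = k + 2 + sum_list ls}" "balanced_code (dna_code k a t ls)"
    by (auto simp: balanced_code_def elim: dna_codeE)
qed (use MU_dna_code[OF assms(1)] APD_dna_code[OF assms(2-6)] in simp_all)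

lemma A_max_upper_bound:
  assumes "even n" "0 < n"
  shows "real (A_max f n) \<le> real (n choose (n div 2)) * 2 ^ n / real n"
proof -
  obtain K where "A_max f n = card K" "K \<subseteq> {w. length w = n}" "APD f n K" "balanced_code K" "MU n K"
    by (rule A_max_attained)
  then have "A_max f n * n \<le> (n choose (n div 2)) * 2 ^ n"
    using card_MU_balanced_le[of K n] assms(1) by simp
  then have "real (A_max f n * n) \<le> real ((n choose (n div 2)) * 2 ^ n)"
    by (rule of_nat_mono)
  then have "real (A_max f n) * real n \<le> real (n choose (n div 2)) * 2 ^ n"
    by simp
  then show ?thesis
    using assms(2) by (simp add: pos_le_divide_eq)
qed

section \<open>Choice of the parameters\<close>

lemma block_lengths:
  assumes "0 < s" "s \<le> L" "L = N div s"
  shows "sum_list (replicate (s - 1) L @ [N - (s - 1) * L]) = N"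
    "length (replicate (s - 1) L @ [N - (s - 1) * L]) = s"
    "\<forall>l\<in>set (replicate (s - 1) L @ [N - (s - 1) * L]). L \<le> l \<and> l \<le> 2 * L"
proof -
  have "s * L + N mod s = N"
    using assms(3) by (simp add: mult.commute)
  then have "s * L \<le> N" "N < s * L + s"
    using mod_less_divisor[OF assms(1), of N] by linarith+
  moreover have "(s - 1) * L + L = s * L"
    using assms(1) by (simp add: algebra_simps)
  ultimately have "(s - 1) * L \<le> N" "L \<le> N - (s - 1) * L" "N - (s - 1) * L \<le> 2 * L"
    using assms(2) by linarith+
  then show "sum_list (replicate (s - 1) L @ [N - (s - 1) * L]) = N"
    "length (replicate (s - 1) L @ [N - (s - 1) * L]) = s"
    "\<forall>l\<in>set (replicate (s - 1) L @ [N - (s - 1) * L]). L \<le> l \<and> l \<le> 2 * L"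
    using assms(1) by (simp_all add: sum_list_replicate)
qed

lemma block_count_bounds:
  fixes s D f n :: nat
  assumes "0 < s" "2 \<le> D" "f \<le> n" "2 * s * (s + 1) * D ^ 2 \<le> f"
  shows "D \<le> n" "(s + 1) * D ^ 2 \<le> (n - D) div s"
proof -
  have "1 * D \<le> (s * (s + 1)) * (D * D)"
    using assms(1,2) by (intro mult_le_mono) simp_all
  moreover have "2 * s * (s + 1) * D ^ 2 = 2 * ((s * (s + 1)) * (D * D))"
    by (simp only: power2_eq_square mult.assoc)
  ultimately have "2 * D \<le> f"
    using assms(4) by linarith
  then have "s * ((s + 1) * D ^ 2) \<le> n - D"
    using assms(3,4) by (simp add: algebra_simps)
  then show "(s + 1) * D ^ 2 \<le> (n - D) div s"
    using assms(1) by (simp add: less_eq_div_iff_mult_less_eq mult.commute)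
  show "D \<le> n"
    using \<open>2 * D \<le> f\<close> assms(3) by linarith
qed

lemma block_parameters:
  fixes p f D :: nat
  assumes "0 < p" "2 \<le> D" "2 * (200 * p) * (200 * p + 1) * D ^ 2 \<le> f"
  defines "L \<equiv> (p * f - D) div (200 * p)"
  shows "D \<le> p * f" "200 * p \<le> L" "D ^ 2 \<le> L" "D \<le> L" "L * (200 * p) \<le> p * f - D"
    "200 * L \<le> f"
proof -
  have "f \<le> p * f"
    using assms(1) by simp
  then have D: "D \<le> p * f" and LD: "(200 * p + 1) * D ^ 2 \<le> L"
    using block_count_bounds[of "200 * p" D f "p * f"] assms(1-3) unfolding L_def by simp_all
  have sq: "D \<le> D ^ 2"
    by (simp add: power2_eq_square le_square)
  then have "(200 * p + 1) * 1 \<le> (200 * p + 1) * D ^ 2" "D ^ 2 \<le> (200 * p + 1) * D ^ 2"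
    using assms(2) by (intro mult_le_mono2, linarith) simp
  then show "D \<le> p * f" "200 * p \<le> L" "D ^ 2 \<le> L" "D \<le> L"
    using sq D LD by auto
  show "L * (200 * p) \<le> p * f - D"
    unfolding L_def by (rule div_times_less_eq_dividend)
  then have "L * (200 * p) \<le> p * f"
    by linarith
  then have "(200 * L) * p \<le> f * p"
    by (simp add: mult_ac)
  then show "200 * L \<le> f"
    using assms(1) by simp
qed

lemma floor_log_marker_bounds:
  fixes n N s k :: nat
  assumes "0 < n" "N + k + 2 = n" "k = floor_log n + (6 * s + 2)"
  shows "2 * 48 ^ s * (N + 1) \<le> 2 ^ k" "2 ^ n / (4 * n * 2 ^ (6 * s + 2)) \<le> (2::real) ^ N"
proof -
  define e where "e = floor_log n"
  have n: "n < 2 * 2 ^ e" "2 ^ e \<le> n"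
    using floor_log_exp2_gt[of n] floor_log_exp2_le[OF assms(1)] by (simp_all add: e_def)
  have k: "k = e + (6 * s + 2)"
    using assms(3) by (simp add: e_def)
  have c0: "(2::nat) ^ (6 * s + 2) = 4 * 64 ^ s"
    by (simp add: power_add power_mult)
  have "2 * 48 ^ s * (N + 1) \<le> 2 * 64 ^ s * n"
    using assms(2) by (intro mult_le_mono power_mono) auto
  also have "\<dots> \<le> 2 * 64 ^ s * (2 * 2 ^ e)"
    using n(1) by simp
  also have "\<dots> = 2 ^ k"
    using c0 k by (simp add: power_add)
  finally show "2 * 48 ^ s * (N + 1) \<le> 2 ^ k" .
  have n_eq: "n = N + (2 + (e + (6 * s + 2)))"
    using assms(2) k by simp
  have "(2::nat) ^ n = 2 ^ N * (2 ^ 2 * (2 ^ e * 2 ^ (6 * s + 2)))"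
    by (subst n_eq) (simp only: power_add)
  also have "\<dots> \<le> 2 ^ N * (4 * n * 2 ^ (6 * s + 2))"
    using n(2) by simp
  finally have "real ((2::nat) ^ n) \<le> real (2 ^ N * (4 * n * 2 ^ (6 * s + 2)))"
    by (rule of_nat_mono)
  then show "2 ^ n / (4 * n * 2 ^ (6 * s + 2)) \<le> (2::real) ^ N"
    using assms(1) by (subst pos_divide_le_eq) simp_all
qed

lemma card_confined_walks_block_ge:
  assumes "0 < L" "L \<le> l" "l \<le> 2 * L"
  shows "2 ^ l / 48 \<le> real (card (confined_walks (sqrt (real L / 2)) (sqrt (96 * real L)) l))"
proof (rule card_confined_walks_ge)
  have "real L \<le> real l" "real l \<le> 2 * real L"
    using assms(2,3) by simp_all
  then show "0 < l" "(sqrt (real L / 2)) ^ 2 \<le> real l / 2" "48 * real l \<le> (sqrt (96 * real L)) ^ 2"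
    using assms(1) by simp_all
qed (use assms(1) in simp_all)

text \<open>A window of length \<open>f \<ge> 200 L\<close> contains at least \<open>98\<close> complete blocks of length at most
  \<open>2 L\<close>; this outweighs the slack \<open>a + 2 t\<close> of the walk and the \<open>D\<close> marker positions.\<close>
lemma climb_of_block_length:
  fixes L D d f :: nat
  assumes "0 < L" "D ^ 2 \<le> L" "200 * L \<le> f" "f \<le> d + D"
  shows "real D + sqrt (real L / 2) + 2 * sqrt (96 * real L) < sqrt (real L / 2) * real (d div (2 * L))"
proof -
  define a where "a = sqrt (real L / 2)"
  define t where "t = sqrt (96 * real L)"
  have a: "0 \<le> a" "a ^ 2 = real L / 2" and t: "0 < t" "t ^ 2 = 96 * real L"
    using assms(1) by (simp_all add: a_def t_def)
  have "t \<le> 14 * a"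
    by (rule power2_le_imp_le) (use a t in \<open>simp_all add: power_mult_distrib\<close>)
  have "real D < t"
  proof (rule power_less_imp_less_base)
    have "real (D ^ 2) \<le> real L" "0 < real L"
      using assms(1,2) by (simp_all only: of_nat_le_iff of_nat_0_less_iff)
    then show "real D ^ 2 < t ^ 2"
      using t(2) unfolding of_nat_power by linarith
  qed (use t in simp)
  have "D \<le> D ^ 2"
    by (simp add: power2_eq_square)
  then have "98 * (2 * L) \<le> d"
    using assms(2-4) by linarith
  then have "98 \<le> d div (2 * L)"
    using assms(1) by (simp add: less_eq_div_iff_mult_less_eq)
  then have "a * 98 \<le> a * real (d div (2 * L))"
    using a(1) by (intro mult_left_mono) simp_all
  then show ?thesis
    using \<open>t \<le> 14 * a\<close> \<open>real D < t\<close> a(1) unfolding a_def[symmetric] t_def[symmetric] by linarith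
qed

lemma A_max_lower_bound:
  fixes p f :: nat
  defines "n \<equiv> p * f" and "s \<equiv> 200 * p" and "c0 \<equiv> 6 * (200 * p) + 2"
  defines "k \<equiv> floor_log (p * f) + c0"
  assumes "0 < p" "even f" "2 * s * (s + 1) * (k + 2) ^ 2 \<le> f"
  shows "1 / (8 * 2 ^ c0 * 48 ^ s) * (real (n choose (n div 2)) * 2 ^ n / real n) \<le> real (A_max f n)"
proof -
  define N where "N = n - (k + 2)"
  define L where "L = N div s"
  define ls where "ls = replicate (s - 1) L @ [N - (s - 1) * L]"
  define a where "a = sqrt (real L / 2)"
  define t where "t = sqrt (96 * real L)"
  have "0 < s" "even n"
    using assms(5,6) by (simp_all add: s_def n_def)
  have "2 * (200 * p) * (200 * p + 1) * (k + 2) ^ 2 \<le> f"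
    using assms(7) by (simp only: s_def)
  note params = block_parameters[OF assms(5) le_add2 this, folded s_def n_def, folded N_def,
      folded L_def]
  have blocks: "sum_list ls = N" "length ls = s" "\<forall>l\<in>set ls. L \<le> l \<and> l \<le> 2 * L"
    unfolding ls_def using block_lengths[of s L N] \<open>0 < s\<close> params(2) L_def by simp_all
  have "L \<le> L * s" "0 < L"
    using \<open>0 < s\<close> params(2) by simp_all
  then have n: "n = k + 2 + sum_list ls" "0 < n" "k \<le> N"
    using params(1,4,5) blocks(1) unfolding N_def by linarith+
  have "0 < k"
    by (simp add: k_def c0_def)
  then have valid: "card (dna_code k a t ls) \<le> A_max f n"
    using card_dna_code_le_A_max[OF _ _ _ _ _ climb_of_block_length[OF \<open>0 < L\<close> params(3,6)]]
      blocks(3) \<open>0 < L\<close> n(1) by (simp add: a_def t_def)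
  have "N + k + 2 = n" "k = floor_log n + (6 * s + 2)"
    using params(1) by (simp_all add: N_def k_def c0_def s_def n_def)
  note markers = floor_log_marker_bounds[OF n(2) this]
  have "\<forall>l\<in>set ls. 2 ^ l / 48 \<le> real (card (confined_walks a t l))"
  proof
    fix l assume "l \<in> set ls"
    then show "2 ^ l / 48 \<le> real (card (confined_walks a t l))"
      using blocks(3) \<open>0 < L\<close> unfolding a_def t_def by (intro card_confined_walks_block_ge) auto
  qed
  then have marked: "2 ^ N / (2 * 48 ^ s) \<le> real (card (marked_walks k a t ls))"
    using card_marked_walks_half[of ls a t k] blocks(1,2) n(3) markers(1) by simp
  have "2 ^ n / (4 * n * 2 ^ c0) \<le> (2::real) ^ N"
    using markers(2) by (simp only: c0_def s_def)
  then have "2 ^ n / (4 * n * 2 ^ c0) / (2 * 48 ^ s) \<le> real (card (marked_walks k a t ls))"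
    using marked by (meson divide_right_mono order_trans zero_le_numeral zero_le_power
        mult_nonneg_nonneg)
  then have "real (n choose (n div 2)) * (2 ^ n / (4 * n * 2 ^ c0) / (2 * 48 ^ s))
      \<le> real (n choose (n div 2)) * real (card (marked_walks k a t ls))"
    by (rule mult_left_mono) simp
  also have "\<dots> = real (card (dna_code k a t ls))"
    using card_dna_code[OF n(1)] \<open>even n\<close> by simp
  also have "\<dots> \<le> real (A_max f n)"
    using valid by simp
  finally show ?thesis
    by (simp add: mult_ac)
qed

lemma eventually_floor_log_square_le:
  fixes p A B :: nat
  assumes "0 < p"
  shows "\<exists>F. \<forall>f\<ge>F. A * (floor_log (p * f) + B) ^ 2 \<le> f"
proof -
  have "\<forall>\<^sub>F x in at_top. real A * (log 2 (real p * x) + real B) ^ 2 \<le> x"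
    using assms by real_asymp
  then obtain X where X: "\<And>x. x \<ge> X \<Longrightarrow> real A * (log 2 (real p * x) + real B) ^ 2 \<le> x"
    by (auto simp: eventually_at_top_linorder)
  show ?thesis
  proof (intro exI allI impI)
    fix f :: nat assume f: "nat \<lceil>X\<rceil> + 1 \<le> f"
    then have "0 < p * f" "X \<le> real f"
      using assms by auto linarith
    moreover have "0 \<le> log 2 (real p * real f)"
      using \<open>0 < p * f\<close> by (simp flip: of_nat_mult)
    ultimately have "real (floor_log (p * f)) \<le> log 2 (real p * real f)"
      by (simp add: floor_log_altdef of_nat_nat)
    then have "real (floor_log (p * f) + B) ^ 2 \<le> (log 2 (real p * real f) + real B) ^ 2"
      by (intro power_mono) simp_all
    then have "real (A * (floor_log (p * f) + B) ^ 2) \<le> real A * (log 2 (real p * real f) + real B) ^ 2"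
      by (simp add: mult_left_mono)
    also have "\<dots> \<le> real f"
      using X[OF \<open>X \<le> real f\<close>] .
    finally show "A * (floor_log (p * f) + B) ^ 2 \<le> f"
      by (simp only: of_nat_le_iff)
  qed
qed

theorem theorem8:
  fixes p :: nat
  assumes "p > 0"
  shows "\<exists>c3::real. c3 > 0 \<and> (\<exists>F. \<forall>f \<ge> F. even f \<longrightarrow>
           (let n = p * f in
              c3 * (real (n choose (n div 2)) * 2 ^ n / real n) \<le> real (A_max f n) \<and>
              real (A_max f n) \<le> real (n choose (n div 2)) * 2 ^ n / real n))"
proof -
  let ?s = "200 * p" and ?c0 = "6 * (200 * p) + 2"
  obtain F where F: "\<And>f. F \<le> f \<Longrightarrow> 2 * ?s * (?s + 1) * (floor_log (p * f) + (?c0 + 2)) ^ 2 \<le> f"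
    using eventually_floor_log_square_le[OF assms] by blast
  show ?thesis
  proof (intro exI conjI allI impI)
    show "0 < 1 / (8 * 2 ^ ?c0 * 48 ^ ?s :: real)"
      by simp
    fix f :: nat assume f: "max F 1 \<le> f" and "even f"
    then have "0 < p * f" "even (p * f)"
      using assms by simp_all
    have "1 / (8 * 2 ^ ?c0 * 48 ^ ?s) * (real (p * f choose (p * f div 2)) * 2 ^ (p * f) / real (p * f))
        \<le> real (A_max f (p * f))"
      using A_max_lower_bound[OF assms \<open>even f\<close>] F f by (simp add: add.assoc)
    moreover have "real (A_max f (p * f)) \<le> real (p * f choose (p * f div 2)) * 2 ^ (p * f) / real (p * f)"
      using A_max_upper_bound[OF \<open>even (p * f)\<close> \<open>0 < p * f\<close>] .
    ultimately show "let n = p * f in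
        1 / (8 * 2 ^ ?c0 * 48 ^ ?s) * (real (n choose (n div 2)) * 2 ^ n / real n) \<le> real (A_max f n) \<and>
        real (A_max f n) \<le> real (n choose (n div 2)) * 2 ^ n / real n"
      by (simp add: Let_def)
  qed
qed

end
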